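(* Let $\lambda_0,\dots,\lambda_n\in\mathbb{C}$, $n\ge1$, $a\neq b$ real, and suppose $E_{(\lambda_0,\dots,\lambda_n)}$ and $E_{(\lambda_0,\dots,\lambda_{n-1})}$ are extended Chebyshev systems for $\{a,b\}$. For $k=0,\dots,n-1$ let $$d_k:=\lim_{x\to b}\frac{\frac{d}{dx}p_{(\lambda_0,\dots,\lambda_n),k}(x)}{p_{(\lambda_0,\dots,\lambda_{n-1}),k}(x)}$$ (these limits exist and are nonzero). Then for all $x\in\mathbb{R}$ $$e^{(x-a)\lambda_n}=p_{(\lambda_0,\dots,\lambda_n),0}(x)+\sum_{k=1}^n(-1)^k d_0\cdots d_{k-1}\,p_{(\lambda_0,\dots,\lambda_n),k}(x),$$ and for $k=1,\dots,n-1$, $$d_0\cdots d_{k-1}=(-1)^n\frac{e^{(b-a)\lambda_n}}{p_{(\lambda_0,\dots,\lambda_n),n}(b)}\cdot\frac{1}{d_k\cdots d_{n-1}}.$$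
   Context: $E_{(\lambda_0,\dots,\lambda_m)}$ denotes the space of all $f\in C^\infty(\mathbb{R},\mathbb{C})$ with $(\frac{d}{dx}-\lambda_0)\cdots(\frac{d}{dx}-\lambda_m)f=0$ (dimension $m+1$). A zero of order (exactly) $k$ at $a$ means $f(a)=\dots=f^{(k-1)}(a)=0$, $f^{(k)}(a)\neq0$. $E_{(\lambda_0,\dots,\lambda_m)}$ is an extended Chebyshev system for $A\subset\mathbb{R}$ if every nonzero element has at most $m$ zeros in $A$ counted with multiplicity. In that case, for $A=\{a,b\}$, $a\ne b$, the Bernstein basis $p_{(\lambda_0,\dots,\lambda_m),k}$, $k=0,\dots,m$, is the unique family in $E_{(\lambda_0,\dots,\lambda_m)}$ with $p_{(\lambda_0,\dots,\lambda_m),k}$ having a zero of order exactly $k$ at $a$ and exactly $m-k$ at $b$, and $p^{(k)}_{(\lambda_0,\dots,\lambda_m),k}(a)=1$. *)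

theory Defs
  imports "HOL-Analysis.Analysis"
begin

fun dn :: "nat \<Rightarrow> (real \<Rightarrow> complex) \<Rightarrow> real \<Rightarrow> complex" where
  "dn 0 f = f"
| "dn (Suc k) f = (\<lambda>x. vector_derivative (dn k f) (at x))"

definition smooth :: "(real \<Rightarrow> complex) \<Rightarrow> bool" where
  "smooth f \<longleftrightarrow> (\<forall>k x. (dn k f has_vector_derivative dn (Suc k) f x) (at x))"

definition Dm :: "complex \<Rightarrow> (real \<Rightarrow> complex) \<Rightarrow> real \<Rightarrow> complex" where
  "Dm l f = (\<lambda>x. vector_derivative f (at x) - l * f x)"

fun ode_op :: "complex list \<Rightarrow> (real \<Rightarrow> complex) \<Rightarrow> real \<Rightarrow> complex" where
  "ode_op [] f = f"
| "ode_op (l # ls) f = Dm l (ode_op ls f)"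

definition Espace :: "complex list \<Rightarrow> (real \<Rightarrow> complex) set" where
  "Espace ls = {f. smooth f \<and> (\<forall>x. ode_op ls f x = 0)}"

definition zero_order :: "(real \<Rightarrow> complex) \<Rightarrow> real \<Rightarrow> nat \<Rightarrow> bool" where
  "zero_order f a k \<longleftrightarrow> (\<forall>j<k. dn j f a = 0) \<and> dn k f a \<noteq> 0"

definition ext_cheb :: "complex list \<Rightarrow> real set \<Rightarrow> bool" where
  "ext_cheb ls A \<longleftrightarrow> (\<forall>f \<in> Espace ls. f \<noteq> (\<lambda>_. 0) \<longrightarrow>
     (\<forall>S (k :: real \<Rightarrow> nat). finite S \<and> S \<subseteq> A \<and> (\<forall>x\<in>S. \<forall>j<k x. dn j f x = 0)
        \<longrightarrow> (\<Sum>x\<in>S. k x) \<le> length ls - 1))"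

definition bern :: "complex list \<Rightarrow> real \<Rightarrow> real \<Rightarrow> nat \<Rightarrow> real \<Rightarrow> complex" where
  "bern ls a b k = (THE p. p \<in> Espace ls \<and> zero_order p a k
      \<and> zero_order p b (length ls - 1 - k) \<and> dn k p a = 1)"

end

theory Submission
  imports Defs "Jordan_Normal_Form.Determinant"
begin

(* Write D_l f = f' - l f, so that E(l_0,...,l_m) is the kernel of D_l0 ... D_lm, and let
   P_k, Q_k be the Bernstein bases of E(l_0,...,l_n) and E(l_0,...,l_(n-1)) for {a,b}.

   D_ln maps E(l_0,...,l_n) into E(l_0,...,l_(n-1)); comparing jets at a and
   at b and using the Chebyshev property (an element with more than n-1 prescribed zeros is 0)
   gives the recurrence  D_ln P_k = Q_(k-1) + delta_k Q_k  (with Q_(-1) = Q_n = 0).  Hence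
   P_k' / Q_k -> delta_k at b, because the remainder vanishes at b to higher order than Q_k.
   With c_k = (-1)^k delta_0 ... delta_(k-1) the recurrence telescopes: D_ln (sum c_k P_k) = 0,
   and the value 1 at a forces sum c_k P_k = exp((x-a) l_n).  Evaluating at b, where only P_n
   survives, shows c_n != 0 (so all delta_k != 0) and gives the product identity. *)

section \<open>Smooth functions and their iterated derivatives\<close>

lemma dn_dn: "dn k (dn j f) = dn (k + j) f"
  by (induction k) auto

lemma smooth_dn: "smooth f \<Longrightarrow> smooth (dn j f)"
  unfolding smooth_def by (simp add: dn_dn)

lemma smooth_deriv: "smooth f \<Longrightarrow> (dn k f has_vector_derivative dn (Suc k) f x) (at x)"
  unfolding smooth_def by blast

text \<open>The same fact with the derivative in the unfolded form produced by the simplifier.\<close>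
lemma smooth_deriv_unfolded:
  "smooth f \<Longrightarrow> (dn k f has_vector_derivative vector_derivative (dn k f) (at x)) (at x)"
  using smooth_deriv[of f k x] by simp

lemma smooth_deriv0: "smooth f \<Longrightarrow> (f has_vector_derivative vector_derivative f (at x)) (at x)"
  using smooth_deriv[of f 0 x] by simp

lemma smooth_continuous: "smooth f \<Longrightarrow> continuous (at x) f"
  using smooth_deriv[of f 0 x] has_vector_derivative_continuous by auto

lemma smooth_derivative_sequence:
  assumes "\<And>k x. (D k has_vector_derivative D (Suc k) x) (at x)" and "D 0 = f"
  shows "smooth f \<and> (\<forall>k. dn k f = D k)"
proof -
  have eq: "dn k f = D k" for k
  proof (induction k)
    case 0 then show ?case using assms(2) by simp
  next
    case (Suc k)
    show ?case using assms(1) by (auto simp: Suc vector_derivative_at)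
  qed
  show ?thesis using assms(1) unfolding smooth_def eq by auto
qed

lemma smooth_add:
  assumes "smooth f" "smooth g"
  shows "smooth (\<lambda>x. f x + g x) \<and> (\<forall>k. dn k (\<lambda>x. f x + g x) = (\<lambda>x. dn k f x + dn k g x))"
  by (rule smooth_derivative_sequence)
     (auto intro!: has_vector_derivative_add smooth_deriv_unfolded assms)

lemma smooth_diff:
  assumes "smooth f" "smooth g"
  shows "smooth (\<lambda>x. f x - g x) \<and> (\<forall>k. dn k (\<lambda>x. f x - g x) = (\<lambda>x. dn k f x - dn k g x))"
  by (rule smooth_derivative_sequence)
     (auto intro!: has_vector_derivative_diff smooth_deriv_unfolded assms)

lemma smooth_cmult:
  assumes "smooth f"
  shows "smooth (\<lambda>x. c * f x) \<and> (\<forall>k. dn k (\<lambda>x. c * f x) = (\<lambda>x. c * dn k f x))"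
  by (rule smooth_derivative_sequence)
     (auto intro!: has_vector_derivative_mult_right smooth_deriv_unfolded assms)

lemma smooth_sum:
  assumes "finite I" "\<And>i. i \<in> I \<Longrightarrow> smooth (f i)"
  shows "smooth (\<lambda>x. \<Sum>i\<in>I. c i * f i x)
    \<and> (\<forall>k. dn k (\<lambda>x. \<Sum>i\<in>I. c i * f i x) = (\<lambda>x. \<Sum>i\<in>I. c i * dn k (f i) x))"
  by (rule smooth_derivative_sequence)
     (auto intro!: has_vector_derivative_sum has_vector_derivative_mult_right
        smooth_deriv_unfolded assms)

lemma smooth_zero: "smooth (\<lambda>x. 0) \<and> (\<forall>k. dn k (\<lambda>x. 0) = (\<lambda>x. 0))"
  by (rule smooth_derivative_sequence) auto

section \<open>The operators \<open>d/dx - l\<close> and their solution spaces\<close>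

lemma Dm_dn: "Dm l f = (\<lambda>x. dn 1 f x - l * f x)"
  unfolding Dm_def by simp

lemma smooth_Dm: "smooth f \<Longrightarrow> smooth (Dm l f)"
  unfolding Dm_dn using smooth_diff smooth_dn smooth_cmult by blast

lemma dn_Dm:
  assumes f: "smooth f"
  shows "dn j (Dm l f) = (\<lambda>x. dn (Suc j) f x - l * dn j f x)"
proof -
  have "dn j (Dm l f) = (\<lambda>x. dn j (dn 1 f) x - dn j (\<lambda>x. l * f x) x)"
    unfolding Dm_dn using smooth_diff[OF smooth_dn[OF f] smooth_cmult[OF f, THEN conjunct1]] by blast
  moreover have "dn j (dn 1 f) = dn (Suc j) f" by (simp only: dn_dn Suc_eq_plus1)
  ultimately show ?thesis using smooth_cmult[OF f, of l] by simp
qed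

lemma Dm_add: "smooth f \<Longrightarrow> smooth g \<Longrightarrow> Dm l (\<lambda>x. f x + g x) = (\<lambda>x. Dm l f x + Dm l g x)"
  unfolding Dm_dn using smooth_add[of f g] by (auto simp: algebra_simps)

lemma Dm_diff: "smooth f \<Longrightarrow> smooth g \<Longrightarrow> Dm l (\<lambda>x. f x - g x) = (\<lambda>x. Dm l f x - Dm l g x)"
  unfolding Dm_dn using smooth_diff[of f g] by (auto simp: algebra_simps)

lemma Dm_cmult: "smooth f \<Longrightarrow> Dm l (\<lambda>x. c * f x) = (\<lambda>x. c * Dm l f x)"
  unfolding Dm_dn using smooth_cmult[of f c] by (auto simp: algebra_simps)

lemma Dm_sum:
  fixes c :: "'a \<Rightarrow> complex"
  assumes "finite I" "\<And>i. i \<in> I \<Longrightarrow> smooth (f i)"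
  shows "Dm l (\<lambda>x. \<Sum>i\<in>I. c i * f i x) = (\<lambda>x. \<Sum>i\<in>I. c i * Dm l (f i) x)"
proof -
  have "dn 1 (\<lambda>x. \<Sum>i\<in>I. c i * f i x) = (\<lambda>x. \<Sum>i\<in>I. c i * dn 1 (f i) x)"
    using smooth_sum[of I f c] assms by blast
  then show ?thesis
    unfolding Dm_dn by (auto simp: fun_eq_iff algebra_simps sum_subtractf sum_distrib_left)
qed

lemma Dm_zero: "Dm l (\<lambda>x. 0) = (\<lambda>x. 0)"
  unfolding Dm_dn using smooth_zero by auto

lemma smooth_ode_op: "smooth f \<Longrightarrow> smooth (ode_op ls f)"
  by (induction ls) (auto intro: smooth_Dm)

lemma ode_op_add:
  "smooth f \<Longrightarrow> smooth g \<Longrightarrow> ode_op ls (\<lambda>x. f x + g x) = (\<lambda>x. ode_op ls f x + ode_op ls g x)"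
  by (induction ls) (auto simp: Dm_add smooth_ode_op)

lemma ode_op_diff:
  "smooth f \<Longrightarrow> smooth g \<Longrightarrow> ode_op ls (\<lambda>x. f x - g x) = (\<lambda>x. ode_op ls f x - ode_op ls g x)"
  by (induction ls) (auto simp: Dm_diff smooth_ode_op)

lemma ode_op_cmult: "smooth f \<Longrightarrow> ode_op ls (\<lambda>x. c * f x) = (\<lambda>x. c * ode_op ls f x)"
  by (induction ls) (auto simp: Dm_cmult smooth_ode_op)

lemma ode_op_zero: "ode_op ls (\<lambda>x. 0) = (\<lambda>x. 0)"
  by (induction ls) (auto simp: Dm_zero)

lemma ode_op_append: "ode_op (ls @ [l]) f = ode_op ls (Dm l f)"
  by (induction ls) auto

lemma Espace_smooth: "f \<in> Espace ls \<Longrightarrow> smooth f"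
  unfolding Espace_def by auto

lemma Espace_add: "f \<in> Espace ls \<Longrightarrow> g \<in> Espace ls \<Longrightarrow> (\<lambda>x. f x + g x) \<in> Espace ls"
  unfolding Espace_def using smooth_add ode_op_add by auto

lemma Espace_diff: "f \<in> Espace ls \<Longrightarrow> g \<in> Espace ls \<Longrightarrow> (\<lambda>x. f x - g x) \<in> Espace ls"
  unfolding Espace_def using smooth_diff ode_op_diff by auto

lemma Espace_cmult: "f \<in> Espace ls \<Longrightarrow> (\<lambda>x. c * f x) \<in> Espace ls"
  unfolding Espace_def using smooth_cmult ode_op_cmult by auto

lemma Espace_zero: "(\<lambda>x. 0) \<in> Espace ls"
  unfolding Espace_def using smooth_zero ode_op_zero by auto

lemma Espace_sum:
  assumes "finite I" "\<And>i. i \<in> I \<Longrightarrow> f i \<in> Espace ls"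
  shows "(\<lambda>x. \<Sum>i\<in>I. c i * f i x) \<in> Espace ls"
  using assms
proof (induction I rule: finite_induct)
  case empty then show ?case using Espace_zero by simp
next
  case (insert i I)
  have "(\<lambda>x. c i * f i x + (\<Sum>i\<in>I. c i * f i x)) \<in> Espace ls"
    by (rule Espace_add) (use insert Espace_cmult in auto)
  then show ?case using insert by simp
qed

lemma Dm_Espace: "f \<in> Espace (ls @ [l]) \<Longrightarrow> Dm l f \<in> Espace ls"
  unfolding Espace_def using smooth_Dm by (simp add: ode_op_append)

lemma exp_has_vector_derivative:
  "((\<lambda>x. exp (complex_of_real (x - a) * l)) has_vector_derivative
     (l * exp (complex_of_real (x - a) * l))) (at x)"
proof -
  have d1: "((\<lambda>x. complex_of_real (x - a)) has_vector_derivative 1) (at x)"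
    by (auto intro!: derivative_eq_intros simp: has_vector_derivative_def fun_eq_iff of_real_def)
  have d2: "((\<lambda>z. exp (z * l)) has_field_derivative (exp (complex_of_real (x - a) * l) * l))
      (at (complex_of_real (x - a)))"
    by (auto intro!: derivative_eq_intros)
  from field_vector_diff_chain_at[OF d1 d2] show ?thesis by (simp add: o_def mult.commute)
qed

lemma exp_smooth:
  "smooth (\<lambda>x. exp (complex_of_real (x - a) * l))
   \<and> (\<forall>k. dn k (\<lambda>x. exp (complex_of_real (x - a) * l))
          = (\<lambda>x. l ^ k * exp (complex_of_real (x - a) * l)))"
proof (rule smooth_derivative_sequence)
  fix k x
  show "((\<lambda>x. l ^ k * exp (complex_of_real (x - a) * l)) has_vector_derivative
      l ^ Suc k * exp (complex_of_real (x - a) * l)) (at x)"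
    using has_vector_derivative_mult_right[OF exp_has_vector_derivative[of a l x], of "l ^ k"]
    by (simp add: algebra_simps)
qed simp

lemma exp_Espace: "(\<lambda>x. exp (complex_of_real (x - a) * l)) \<in> Espace (ls @ [l])"
proof -
  have "Dm l (\<lambda>x. exp (complex_of_real (x - a) * l)) = (\<lambda>x. 0)"
    unfolding Dm_dn using exp_smooth[of a l] by auto
  then show ?thesis unfolding Espace_def using exp_smooth[of a l]
    by (simp add: ode_op_append ode_op_zero)
qed

text \<open>Uniqueness for the first-order equation \<open>f' = l f\<close>: \<open>f e^{-(x-a)l}\<close> has zero derivative.\<close>
lemma Dm_zero_imp_exp:
  assumes f: "smooth f" and ode: "\<And>x. Dm l f x = 0"
  shows "f x = f a * exp (complex_of_real (x - a) * l)"
proof -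
  define E where "E y = exp (complex_of_real (y - a) * (- l))" for y
  have "((\<lambda>y. E y * f y) has_vector_derivative 0) (at y within UNIV)" for y
  proof -
    have "((\<lambda>y. E y * f y) has_vector_derivative
        E y * vector_derivative f (at y) + - l * E y * f y) (at y)"
      unfolding E_def by (rule has_vector_derivative_mult[OF exp_has_vector_derivative smooth_deriv0[OF f]])
    moreover have "E y * vector_derivative f (at y) + - l * E y * f y = E y * Dm l f y"
      unfolding Dm_def by (simp add: algebra_simps)
    ultimately show ?thesis using ode[of y] by (metis mult_zero_right)
  qed
  then obtain c where "\<And>y. E y * f y = c"
    using has_vector_derivative_zero_constant[of UNIV "\<lambda>y. E y * f y"] by auto
  then have Ef: "E x * f x = f a" unfolding E_def by (metis diff_self exp_zero mult_1 mult_zero_left of_real_0)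
  have EX: "E x * exp (complex_of_real (x - a) * l) = 1"
    unfolding E_def by (simp add: exp_add[symmetric])
  have "f x = f x * (E x * exp (complex_of_real (x - a) * l))" using EX by simp
  also have "\<dots> = f a * exp (complex_of_real (x - a) * l)" using Ef by (simp add: ac_simps)
  finally show ?thesis .
qed

section \<open>The Chebyshev uniqueness principle\<close>

lemma cheb_zero:
  assumes "ext_cheb L {a, b}" "a \<noteq> b" "f \<in> Espace L"
    "\<forall>j<p. dn j f a = 0" "\<forall>j<q. dn j f b = 0" "p + q > length L - 1"
  shows "f = (\<lambda>_. 0)"
proof (rule ccontr)
  assume "f \<noteq> (\<lambda>_. 0)"
  define k where "k = (\<lambda>x. if x = a then p else q)"
  have "(\<Sum>x\<in>{a,b}. k x) \<le> length L - 1"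
    using assms(1,3) \<open>f \<noteq> _\<close> unfolding ext_cheb_def
    apply (elim ballE allE[of _ "{a,b}"] allE[of _ k])
    using assms(4,5) by (auto simp: k_def)
  then show False using assms(2,6) by (simp add: k_def)
qed

lemma eq_by_cheb:
  assumes cheb: "ext_cheb L {a, b}" and ab: "a \<noteq> b" and f: "f \<in> Espace L" and g: "g \<in> Espace L"
    and "\<forall>j<p. dn j f a = dn j g a" "\<forall>j<q. dn j f b = dn j g b" "p + q > length L - 1"
  shows "f = g"
proof -
  define W where "W = (\<lambda>x. f x - g x)"
  have WE: "W \<in> Espace L" unfolding W_def using Espace_diff f g by blast
  have dW: "dn j W = (\<lambda>x. dn j f x - dn j g x)" for j
    unfolding W_def using smooth_diff[of f g] f g Espace_smooth by blast
  have "W = (\<lambda>_. 0)" by (rule cheb_zero[OF cheb ab WE]) (use assms(5-7) dW in auto)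
  then show ?thesis unfolding W_def by (auto simp: fun_eq_iff)
qed

section \<open>Existence of the Bernstein basis\<close>

lemma antiderivative_UNIV:
  fixes f :: "real \<Rightarrow> complex"
  assumes "\<And>x. continuous (at x) f"
  obtains F where "\<And>x. (F has_vector_derivative f x) (at x)"
  using einterval_antiderivative[of "-\<infinity>" "\<infinity>" f] assms by auto

lemma smooth_solution:
  assumes f: "smooth f" and g: "\<And>x. (g has_vector_derivative l * g x + f x) (at x)"
  shows "smooth g \<and> Dm l g = f"
proof -
  define D where "D = rec_nat g (\<lambda>k Dk. (\<lambda>x. l * Dk x + dn k f x))"
  have D0: "D 0 = g" and DS: "D (Suc k) = (\<lambda>x. l * D k x + dn k f x)" for k
    unfolding D_def by simp_all
  have "(D k has_vector_derivative D (Suc k) x) (at x)" for k x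
  proof (induction k arbitrary: x)
    case 0 then show ?case using g by (simp add: D0 DS)
  next
    case (Suc k)
    have "((\<lambda>x. l * D k x + dn k f x) has_vector_derivative l * D (Suc k) x + dn (Suc k) f x) (at x)"
      by (intro has_vector_derivative_add has_vector_derivative_mult_right Suc smooth_deriv f)
    then show ?case by (simp only: DS)
  qed
  from smooth_derivative_sequence[OF this D0]
  have "smooth g" and "\<And>k. dn k g = D k" by auto
  then show ?thesis unfolding Dm_dn using DS[of 0] D0 by simp
qed

text \<open>Variation of constants: \<open>D_l g = f\<close> has a smooth solution vanishing at \<open>a\<close>.\<close>
lemma solve_Dm:
  assumes f: "smooth f"
  obtains g where "smooth g" "g a = 0" "Dm l g = f"
proof -
  define E where "E l' x = exp (complex_of_real (x - a) * l')" for l' x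
  have "continuous (at x) (\<lambda>x. E (- l) x * f x)" for x
    unfolding E_def using has_vector_derivative_continuous[OF exp_has_vector_derivative]
      smooth_continuous[OF f] by (intro continuous_mult) auto
  then obtain F where F: "\<And>x. (F has_vector_derivative E (- l) x * f x) (at x)"
    using antiderivative_UNIV by blast
  define g where "g x = E l x * (F x - F a)" for x
  have "(g has_vector_derivative l * g x + f x) (at x)" for x
  proof -
    have "((\<lambda>x. F x - F a) has_vector_derivative E (- l) x * f x) (at x)"
      using has_vector_derivative_diff[OF F has_vector_derivative_const] by simp
    from has_vector_derivative_mult[OF exp_has_vector_derivative this]
    have "(g has_vector_derivative E l x * (E (- l) x * f x) + l * E l x * (F x - F a)) (at x)"
      unfolding g_def E_def by simp
    moreover have "E l x * E (- l) x = 1"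
      unfolding E_def by (simp add: exp_add[symmetric])
    ultimately show ?thesis unfolding g_def by (simp add: algebra_simps)
  qed
  with smooth_solution[OF f] have "smooth g" "Dm l g = f" by auto
  moreover have "g a = 0" unfolding g_def by simp
  ultimately show ?thesis using that by blast
qed

text \<open>They are
  obtained by induction on \<open>L\<close>: the exponential, and solutions of \<open>D_l g = h_i\<close> with \<open>g(a) = 0\<close>.\<close>
lemma triangular_basis:
  "\<exists>h. \<forall>i<length L. h i \<in> Espace L \<and> (\<forall>j<i. dn j (h i) a = 0) \<and> dn i (h i) a = 1"
proof (induction L rule: rev_induct)
  case Nil then show ?case by simp
next
  case (snoc l L)
  then obtain h where h: "\<And>i. i < length L \<Longrightarrow>
      h i \<in> Espace L \<and> (\<forall>j<i. dn j (h i) a = 0) \<and> dn i (h i) a = 1"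
    by blast
  have "\<forall>i. \<exists>g. i < length L \<longrightarrow> smooth g \<and> g a = 0 \<and> Dm l g = h i"
    using solve_Dm h Espace_smooth by metis
  then obtain G where G: "\<And>i. i < length L \<Longrightarrow> smooth (G i) \<and> G i a = 0 \<and> Dm l (G i) = h i"
    by metis
  define H where
    "H i = (if i = 0 then (\<lambda>x. exp (complex_of_real (x - a) * l)) else G (i - 1))" for i
  have "H i \<in> Espace (L @ [l]) \<and> (\<forall>j<i. dn j (H i) a = 0) \<and> dn i (H i) a = 1"
    if "i < length (L @ [l])" for i
  proof (cases i)
    case 0
    then show ?thesis using exp_Espace[of a l L] exp_smooth[of a l] by (simp add: H_def)
  next
    case (Suc i')
    then have i': "i' < length L" using that by simp
    have g: "smooth (G i')" "G i' a = 0" "Dm l (G i') = h i'" using G[OF i'] by auto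
    have rec: "dn (Suc j) (G i') a = l * dn j (G i') a + dn j (h i') a" for j
      using dn_Dm[OF g(1), of j l] g(3) by (auto simp: fun_eq_iff algebra_simps)
    have low: "\<forall>j\<le>i'. dn j (G i') a = 0"
    proof (intro allI impI)
      fix j assume "j \<le> i'"
      then show "dn j (G i') a = 0"
        by (induction j) (use g(2) rec h[OF i'] in auto)
    qed
    have "dn (Suc i') (G i') a = 1" using rec[of i'] low h[OF i'] by simp
    moreover have "G i' \<in> Espace (L @ [l])"
      using g h[OF i'] unfolding Espace_def by (simp add: ode_op_append)
    ultimately show ?thesis using Suc low by (auto simp: H_def less_Suc_eq_le)
  qed
  then show ?case by blast
qed

lemma triangular_independent:
  assumes B: "\<And>i. i < N \<Longrightarrow> smooth (B i)"
    "\<And>i j. i < N \<Longrightarrow> j < i \<Longrightarrow> dn j (B i) a = 0"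
    "\<And>i. i < N \<Longrightarrow> dn i (B i) a = 1"
    and z: "\<And>j. j < N \<Longrightarrow> dn j (\<lambda>x. \<Sum>i<N. c i * B i x) a = 0"
  shows "\<forall>i<N. c i = 0"
proof -
  have dsum: "dn j (\<lambda>x. \<Sum>i<N. c i * B i x) a = (\<Sum>i<N. c i * dn j (B i) a)" for j
    using smooth_sum[of "{..<N}" B c] B(1) by auto
  have "c i = 0" if "i < N" for i
    using that
  proof (induction i rule: less_induct)
    case (less i)
    have "(\<Sum>i'<N. c i' * dn i (B i') a) = (\<Sum>i'<N. if i' = i then c i else 0)"
    proof (rule sum.cong)
      fix i' assume "i' \<in> {..<N}"
      then show "c i' * dn i (B i') a = (if i' = i then c i else 0)"
        using less B(2)[of i' i] B(3)[of i] by (cases i' i rule: linorder_cases) auto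
    qed simp
    also have "\<dots> = c i" using less.prems by simp
    finally show ?case using z[OF less.prems] dsum[of i] by simp
  qed
  then show ?thesis by blast
qed

lemma solve_square_system:
  fixes M :: "nat \<Rightarrow> nat \<Rightarrow> complex" and N :: nat and y :: "nat \<Rightarrow> complex"
  assumes inj: "\<And>c. \<forall>r<N. (\<Sum>i<N. M r i * c i) = 0 \<Longrightarrow> \<forall>i<N. c i = 0"
  obtains c where "\<forall>r<N. (\<Sum>i<N. M r i * c i) = y r"
proof -
  define A where "A = mat N N (\<lambda>(r,i). M r i)"
  have A: "A \<in> carrier_mat N N" unfolding A_def by auto
  have mv: "\<And>v r. v \<in> carrier_vec N \<Longrightarrow> r < N \<Longrightarrow> (A *\<^sub>v v) $ r = (\<Sum>i<N. M r i * v $ i)"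
    unfolding A_def
    by (auto simp: scalar_prod_def row_def lessThan_atLeast0 mult.commute intro!: sum.cong)
  have "det A \<noteq> 0"
  proof
    assume "det A = 0"
    then obtain v where v: "v \<in> carrier_vec N" "v \<noteq> 0\<^sub>v N" "A *\<^sub>v v = 0\<^sub>v N"
      using det_0_iff_vec_prod_zero[OF A] by auto
    have "\<forall>r<N. (\<Sum>i<N. M r i * v $ i) = 0"
      using v mv by (metis index_zero_vec(1))
    then have "v = 0\<^sub>v N" using inj v(1) by (auto intro!: eq_vecI)
    with v(2) show False by simp
  qed
  from det_non_zero_imp_unit[OF A this, of "()"] obtain B where
    B: "B \<in> carrier_mat N N" "A * B = 1\<^sub>m N"
    unfolding Units_def ring_mat_def by auto
  define w where "w = B *\<^sub>v vec N y"
  have w: "w \<in> carrier_vec N" unfolding w_def using B by auto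
  have "A *\<^sub>v w = vec N y" unfolding w_def
    using B A by (metis assoc_mult_mat_vec one_mult_mat_vec vec_carrier)
  then have "\<forall>r<N. (\<Sum>i<N. M r i * w $ i) = y r"
    using mv[OF w] by (metis index_vec)
  then show ?thesis using that by blast
qed

text \<open>Existence of the \<open>k\<close>-th Bernstein function: prescribe the jet of order \<open>k\<close> at \<open>a\<close> and of
  order \<open>m - k - 1\<close> at \<open>b\<close>; by the Chebyshev property this square system is uniquely solvable
  within the span of a triangular basis.\<close>
lemma bern_exists:
  assumes cheb: "ext_cheb L {a, b}" and ab: "a \<noteq> b" and k: "k < length L"
  obtains p where "p \<in> Espace L" "\<forall>j<k. dn j p a = 0" "dn k p a = 1"
    "\<forall>j<length L - 1 - k. dn j p b = 0"
proof -
  define N where "N = length L"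
  obtain h where h: "\<And>i. i < N \<Longrightarrow> h i \<in> Espace L \<and> (\<forall>j<i. dn j (h i) a = 0) \<and> dn i (h i) a = 1"
    using triangular_basis[of L a] unfolding N_def by blast
  have hs: "\<And>i. i < N \<Longrightarrow> smooth (h i)" using h Espace_smooth by blast
  define jet where "jet p r = (if r \<le> k then dn r p a else dn (r - k - 1) p b)" for p r
  define comb where "comb c = (\<lambda>x. \<Sum>i<N. c i * h i x)" for c
  have jet_comb: "jet (comb c) r = (\<Sum>i<N. jet (h i) r * c i)" for r c
    using smooth_sum[of "{..<N}" h c] hs by (auto simp: jet_def comb_def mult.commute)
  have comb_E: "comb c \<in> Espace L" for c
    unfolding comb_def by (rule Espace_sum) (use h in auto)
  obtain c where c: "\<forall>r<N. (\<Sum>i<N. jet (h i) r * c i) = (if r = k then 1 else 0)"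
  proof (rule solve_square_system)
    fix c assume "\<forall>r<N. (\<Sum>i<N. jet (h i) r * c i) = 0"
    then have z: "jet (comb c) r = 0" if "r < N" for r using that jet_comb by simp
    have "\<forall>j<Suc k. dn j (comb c) a = 0"
      using z k unfolding N_def jet_def by (metis less_Suc_eq_le order_le_less_trans)
    moreover have "\<forall>j<N - 1 - k. dn j (comb c) b = 0"
      using z[of "_ + k + 1"] by (auto simp: jet_def)
    ultimately have "comb c = (\<lambda>_. 0)"
      using cheb_zero[OF cheb ab comb_E] k N_def by simp
    then have "\<forall>j<N. dn j (comb c) a = 0" using smooth_zero by simp
    then show "\<forall>i<N. c i = 0"
      using triangular_independent[of N h a c] h hs unfolding comb_def by blast
  qed
  then have jet_c: "jet (comb c) r = (if r = k then 1 else 0)" if "r < N" for r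
    using that jet_comb by simp
  show ?thesis
  proof (rule that[OF comb_E])
    show "\<forall>j<k. dn j (comb c) a = 0"
      using jet_c k unfolding N_def jet_def by (metis less_imp_le_nat less_not_refl order.strict_trans)
    show "dn k (comb c) a = 1"
      using jet_c[of k] k unfolding N_def jet_def by simp
    show "\<forall>j<length L - 1 - k. dn j (comb c) b = 0"
      using jet_c[of "_ + k + 1"] unfolding N_def jet_def by auto
  qed
qed

lemma bern_props:
  assumes cheb: "ext_cheb L {a, b}" and ab: "a \<noteq> b" and k: "k < length L"
  shows "bern L a b k \<in> Espace L \<and> (\<forall>j<k. dn j (bern L a b k) a = 0) \<and> dn k (bern L a b k) a = 1
    \<and> (\<forall>j<length L - 1 - k. dn j (bern L a b k) b = 0) \<and> dn (length L - 1 - k) (bern L a b k) b \<noteq> 0"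
proof -
  obtain p where p: "p \<in> Espace L" "\<forall>j<k. dn j p a = 0" "dn k p a = 1"
      "\<forall>j<length L - 1 - k. dn j p b = 0"
    using bern_exists[OF cheb ab k] by blast
  have nz: "dn (length L - 1 - k) p b \<noteq> 0"
  proof
    assume z: "dn (length L - 1 - k) p b = 0"
    have "\<forall>j<Suc (length L - 1 - k). dn j p b = 0" using p(4) z less_Suc_eq by auto
    from cheb_zero[OF cheb ab p(1) p(2) this] k have "p = (\<lambda>_. 0)" by simp
    then show False using p(3) smooth_zero by simp
  qed
  have unique: "q = p" if q: "q \<in> Espace L" "zero_order q a k" "zero_order q b (length L - 1 - k)"
    "dn k q a = 1" for q
  proof (rule eq_by_cheb[OF cheb ab q(1) p(1)])
    show "\<forall>j<Suc k. dn j q a = dn j p a"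
      using q(2,4) p(2,3) by (auto simp: zero_order_def less_Suc_eq)
    show "\<forall>j<length L - 1 - k. dn j q b = dn j p b"
      using q(3) p(4) by (simp add: zero_order_def)
    show "Suc k + (length L - 1 - k) > length L - 1" using k by simp
  qed
  have "p \<in> Espace L \<and> zero_order p a k \<and> zero_order p b (length L - 1 - k) \<and> dn k p a = 1"
    using p nz by (simp add: zero_order_def)
  then have "bern L a b k = p" unfolding bern_def using unique by (intro the_equality) blast+
  then show ?thesis using p nz by simp
qed

section \<open>Quotients of functions vanishing at a point\<close>

text \<open>One step of l'Hopital's rule, applied to a real-valued linear part \<open>q\<close> (real or
  imaginary part) of a smooth complex function vanishing at \<open>b\<close>.\<close>
lemma lhopital_part:
  fixes q :: "complex \<Rightarrow> real"
  assumes qdiv: "\<And>z t. q (z / complex_of_real t) = q z / t"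
    and qder: "\<And>f D x. (f has_vector_derivative D) (at x) \<Longrightarrow> ((\<lambda>x. q (f x)) has_field_derivative q D) (at x)"
    and qlim: "\<And>(f::real \<Rightarrow> complex) l F. (f \<longlongrightarrow> l) F \<Longrightarrow> ((\<lambda>x. q (f x)) \<longlongrightarrow> q l) F"
    and q0: "q 0 = 0"
    and h: "smooth h" "h b = 0"
    and lim: "((\<lambda>x. dn 1 h x / complex_of_real ((x - b) ^ r)) \<longlongrightarrow> L) (at b)"
  shows "((\<lambda>x. q (h x) / (x - b) ^ Suc r) \<longlongrightarrow> q L / real (Suc r)) (at b)"
proof (rule lhopital[where f' = "\<lambda>x. q (dn 1 h x)" and g' = "\<lambda>x. real (Suc r) * (x - b) ^ r"])
  have "(h \<longlongrightarrow> h b) (at b)" using smooth_continuous[OF h(1)] by (simp add: isCont_def)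
  from qlim[OF this] show "((\<lambda>x. q (h x)) \<longlongrightarrow> 0) (at b)" using h(2) q0 by simp
  show "((\<lambda>x. (x - b) ^ Suc r) \<longlongrightarrow> 0) (at b)"
    by (rule tendsto_eq_intros refl)+ simp
  show "\<forall>\<^sub>F x in at b. (x - b) ^ Suc r \<noteq> 0"
    unfolding eventually_at_filter by (auto intro: always_eventually)
  show "\<forall>\<^sub>F x in at b. real (Suc r) * (x - b) ^ r \<noteq> 0"
    unfolding eventually_at_filter by (auto intro: always_eventually)
  have "(h has_vector_derivative dn 1 h x) (at x)" for x
    using smooth_deriv[OF h(1), of 0 x] by simp
  then show "\<forall>\<^sub>F x in at b. ((\<lambda>x. q (h x)) has_real_derivative q (dn 1 h x)) (at x)"
    by (intro always_eventually allI qder)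
  show "\<forall>\<^sub>F x in at b. ((\<lambda>x. (x - b) ^ Suc r) has_real_derivative real (Suc r) * (x - b) ^ r) (at x)"
    by (intro always_eventually allI) (auto intro!: derivative_eq_intros; cases r; simp add: field_simps)
  have "((\<lambda>x. q (dn 1 h x / complex_of_real ((x - b) ^ r)) / real (Suc r)) \<longlongrightarrow> q L / real (Suc r)) (at b)"
    by (intro tendsto_divide qlim lim tendsto_const) simp
  moreover have "(\<lambda>x. q (dn 1 h x / complex_of_real ((x - b) ^ r)) / real (Suc r))
      = (\<lambda>x. q (dn 1 h x) / (real (Suc r) * (x - b) ^ r))"
    by (rule ext) (simp only: qdiv divide_divide_eq_left mult.commute)
  ultimately show "((\<lambda>x. q (dn 1 h x) / (real (Suc r) * (x - b) ^ r)) \<longlongrightarrow> q L / real (Suc r)) (at b)"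
    by simp
qed

lemma taylor_limit:
  assumes "smooth h" "\<forall>j<r. dn j h b = 0"
  shows "((\<lambda>x. h x / complex_of_real ((x - b) ^ r)) \<longlongrightarrow> dn r h b / complex_of_real (fact r)) (at b)"
  using assms
proof (induction r arbitrary: h)
  case 0
  then show ?case using smooth_continuous[OF 0(1)] by (simp add: isCont_def)
next
  case (Suc r)
  let ?L = "dn (Suc r) h b / complex_of_real (fact r)"
  have dh: "dn j (dn 1 h) = dn (Suc j) h" for j by (simp only: dn_dn Suc_eq_plus1)
  have "((\<lambda>x. dn 1 h x / complex_of_real ((x - b) ^ r)) \<longlongrightarrow>
      dn r (dn 1 h) b / complex_of_real (fact r)) (at b)"
    by (rule Suc.IH[OF smooth_dn[OF Suc.prems(1)]]) (use Suc.prems(2) dh in auto)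
  then have lim: "((\<lambda>x. dn 1 h x / complex_of_real ((x - b) ^ r)) \<longlongrightarrow> ?L) (at b)"
    unfolding dh .
  have hb: "h b = 0" using Suc.prems(2) by (metis dn.simps(1) zero_less_Suc)
  have re: "((\<lambda>x. Re (h x) / (x - b) ^ Suc r) \<longlongrightarrow> Re ?L / real (Suc r)) (at b)"
    by (rule lhopital_part[OF _ _ _ _ Suc.prems(1) hb lim])
       (auto intro: has_field_derivative_Re tendsto_Re)
  have im: "((\<lambda>x. Im (h x) / (x - b) ^ Suc r) \<longlongrightarrow> Im ?L / real (Suc r)) (at b)"
    by (rule lhopital_part[OF _ _ _ _ Suc.prems(1) hb lim])
       (auto intro: has_field_derivative_Im tendsto_Im)
  have parts: "Complex (Re (z / complex_of_real t) / s) (Im (z / complex_of_real t) / s)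
      = z / complex_of_real (s * t)" for z t s
    by (simp only: complex_eq_iff Re_divide_of_real Im_divide_of_real complex.sel
        divide_divide_eq_left mult.commute)
  have "((\<lambda>x. Complex (Re (h x) / (x - b) ^ Suc r) (Im (h x) / (x - b) ^ Suc r)) \<longlongrightarrow>
      Complex (Re ?L / real (Suc r)) (Im ?L / real (Suc r))) (at b)"
    by (rule tendsto_Complex[OF re im])
  moreover have "Complex (Re (h x) / (x - b) ^ Suc r) (Im (h x) / (x - b) ^ Suc r)
      = h x / complex_of_real ((x - b) ^ Suc r)" for x
    by (simp add: complex_eq_iff)
  moreover have "Complex (Re ?L / real (Suc r)) (Im ?L / real (Suc r))
      = dn (Suc r) h b / complex_of_real (fact (Suc r))"
    unfolding parts fact_Suc[of r] by simp
  ultimately show ?case by simp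
qed

lemma quotient_tendsto_zero:
  assumes f: "smooth f" "\<forall>j\<le>r. dn j f b = 0"
    and g: "smooth g" "\<forall>j<r. dn j g b = 0" "dn r g b \<noteq> 0"
  shows "((\<lambda>x. f x / g x) \<longlongrightarrow> 0) (at b) \<and> eventually (\<lambda>x. g x \<noteq> 0) (at b)"
proof -
  let ?t = "\<lambda>x. complex_of_real ((x - b) ^ r)"
  have F: "((\<lambda>x. f x / ?t x) \<longlongrightarrow> 0) (at b)"
    using taylor_limit[OF f(1), of r b] f(2) by simp
  have G: "((\<lambda>x. g x / ?t x) \<longlongrightarrow> dn r g b / complex_of_real (fact r)) (at b)"
    using taylor_limit[OF g(1) g(2)] .
  have nz: "dn r g b / complex_of_real (fact r) \<noteq> 0" using g(3) by simp
  have "eventually (\<lambda>x. g x / ?t x \<noteq> 0) (at b)"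
    using tendsto_imp_eventually_ne[OF G nz] .
  then have ev: "eventually (\<lambda>x. g x \<noteq> 0) (at b)" by (rule eventually_mono) auto
  have "((\<lambda>x. (f x / ?t x) / (g x / ?t x)) \<longlongrightarrow> 0) (at b)"
    using tendsto_divide[OF F G nz] by simp
  moreover have "eventually (\<lambda>x. (f x / ?t x) / (g x / ?t x) = f x / g x) (at b)"
    unfolding eventually_at_filter by (auto intro: always_eventually)
  ultimately show ?thesis using ev Lim_transform_eventually by fastforce
qed

text \<open>If \<open>c (k+1) = - \<beta>_k c_k\<close>, the combination \<open>\<Sum> c_k (u_(k-1) + \<beta>_k u_k)\<close>, with
  \<open>u_(-1) = u_n = 0\<close>, vanishes; this is the shape of \<open>D_l\<close> applied to the expansion.\<close>
lemma telescoping_sum: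
  fixes c \<beta> u :: "nat \<Rightarrow> 'a::comm_ring_1"
  assumes c: "\<And>k. c (Suc k) = - \<beta> k * c k"
  shows "(\<Sum>k\<le>n. c k * ((if k = 0 then 0 else u (k - 1)) + \<beta> k * (if k < n then u k else 0))) = 0"
proof -
  have below: "(\<Sum>k\<le>n. c k * (if k = 0 then 0 else u (k - 1))) = - (\<Sum>k<n. \<beta> k * c k * u k)"
    by (cases n) (simp_all del: sum.atMost_Suc add: sum.atMost_Suc_shift lessThan_Suc_atMost c sum_negf)
  have same: "(\<Sum>k\<le>n. c k * (\<beta> k * (if k < n then u k else 0))) = (\<Sum>k<n. \<beta> k * c k * u k)"
    unfolding lessThan_Suc_atMost[symmetric] by (simp add: ac_simps)
  show ?thesis unfolding distrib_left sum.distrib below same by simp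
qed

text \<open>The jets below are stated with \<open>dn (Suc j)\<close>; keep the simplifier from unfolding it.\<close>
declare dn.simps(2)[simp del]

section \<open>The Bernstein bases of two nested Chebyshev systems\<close>

locale bernstein_pair =
  fixes lam :: "nat \<Rightarrow> complex" and n :: nat and a b :: real
  assumes n_pos: "n \<ge> 1" and a_ne_b: "a \<noteq> b"
    and cheb_long: "ext_cheb (map lam [0..<Suc n]) {a, b}"
    and cheb_short: "ext_cheb (map lam [0..<n]) {a, b}"
begin

abbreviation L :: "complex list" where "L \<equiv> map lam [0..<n]"
abbreviation P :: "nat \<Rightarrow> real \<Rightarrow> complex" where "P \<equiv> bern (L @ [lam n]) a b"
abbreviation Q :: "nat \<Rightarrow> real \<Rightarrow> complex" where "Q \<equiv> bern L a b"

lemma P_props: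
  assumes "k \<le> n"
  shows "P k \<in> Espace (L @ [lam n]) \<and> (\<forall>j<k. dn j (P k) a = 0) \<and> dn k (P k) a = 1
    \<and> (\<forall>j<n - k. dn j (P k) b = 0) \<and> dn (n - k) (P k) b \<noteq> 0"
  using bern_props[of "L @ [lam n]" a b k] cheb_long a_ne_b assms by simp

lemma P_smooth: "k \<le> n \<Longrightarrow> smooth (P k)"
  using P_props Espace_smooth by blast

lemma Q_props:
  assumes "k < n"
  shows "Q k \<in> Espace L \<and> (\<forall>j<k. dn j (Q k) a = 0) \<and> dn k (Q k) a = 1
    \<and> (\<forall>j<n - 1 - k. dn j (Q k) b = 0) \<and> dn (n - 1 - k) (Q k) b \<noteq> 0"
  using bern_props[OF cheb_short a_ne_b, of k] assms by simp

definition Q_below :: "nat \<Rightarrow> real \<Rightarrow> complex" where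
  "Q_below k x = (if k = 0 then 0 else Q (k - 1) x)"

definition Q_same :: "nat \<Rightarrow> real \<Rightarrow> complex" where
  "Q_same k x = (if k < n then Q k x else 0)"

lemma Q_below_eq: "Q_below k = (if k = 0 then (\<lambda>_. 0) else Q (k - 1))"
  by (auto simp: Q_below_def)

lemma Q_same_eq: "Q_same k = (if k < n then Q k else (\<lambda>_. 0))"
  by (auto simp: Q_same_def)

lemma Q_below_props:
  assumes "k \<le> n"
  shows "Q_below k \<in> Espace L \<and> (\<forall>j<k. dn j (Q_below k) a = (if j = k - 1 then 1 else 0))
    \<and> (\<forall>j<n - k. dn j (Q_below k) b = 0)"
  using Q_props[of "k - 1"] assms smooth_zero Espace_zero
  by (auto simp: Q_below_eq less_diff_conv)

lemma Q_same_props: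
  assumes "k \<le> n"
  shows "Q_same k \<in> Espace L \<and> (\<forall>j<k. dn j (Q_same k) a = 0) \<and> (\<forall>j<n - 1 - k. dn j (Q_same k) b = 0)"
  using Q_props[of k] assms smooth_zero Espace_zero by (auto simp: Q_same_eq)

text \<open>The coefficient of \<open>Q_k\<close> in \<open>D_(lam n) P_k\<close>; it turns out to be the limit \<open>d_k\<close>.\<close>
definition delta :: "nat \<Rightarrow> complex" where
  "delta k = dn (n - 1 - k) (Dm (lam n) (P k)) b / dn (n - 1 - k) (Q k) b"

text \<open>The recurrence \<open>D_(lam n) P_k = Q_(k-1) + delta_k Q_k\<close>: both sides lie in \<open>E(lam_0,...,lam_(n-1))\<close>
  and have the same jets of order \<open>k\<close> at \<open>a\<close> and of order \<open>n - k\<close> at \<open>b\<close>.\<close>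
lemma Dm_P_recurrence:
  assumes k: "k \<le> n"
  shows "Dm (lam n) (P k) = (\<lambda>x. Q_below k x + delta k * Q_same k x)"
proof -
  note Pk = P_props[OF k] and Qb = Q_below_props[OF k] and Qs = Q_same_props[OF k]
  have sP: "smooth (P k)" and sQb: "smooth (Q_below k)" and sQs: "smooth (Q_same k)"
    using P_smooth[OF k] Qb Qs Espace_smooth by blast+
  have dR: "dn j (Dm (lam n) (P k)) x = dn (Suc j) (P k) x - lam n * dn j (P k) x" for j x
    using dn_Dm[OF sP] by simp
  have dS: "dn j (\<lambda>x. Q_below k x + delta k * Q_same k x) x
      = dn j (Q_below k) x + delta k * dn j (Q_same k) x" for j x
    using smooth_add[OF sQb smooth_cmult[OF sQs, THEN conjunct1]] smooth_cmult[OF sQs] by simp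
  show ?thesis
  proof (rule eq_by_cheb[OF cheb_short a_ne_b])
    show "Dm (lam n) (P k) \<in> Espace L" using Dm_Espace Pk by blast
    show "(\<lambda>x. Q_below k x + delta k * Q_same k x) \<in> Espace L"
      using Espace_add Espace_cmult Qb Qs by blast
    show "\<forall>j<k. dn j (Dm (lam n) (P k)) a = dn j (\<lambda>x. Q_below k x + delta k * Q_same k x) a"
      using Pk Qb Qs unfolding dR dS by (auto simp: Suc_lessI)
    show "\<forall>j<n - k. dn j (Dm (lam n) (P k)) b = dn j (\<lambda>x. Q_below k x + delta k * Q_same k x) b"
    proof (intro allI impI)
      fix j assume j: "j < n - k"
      show "dn j (Dm (lam n) (P k)) b = dn j (\<lambda>x. Q_below k x + delta k * Q_same k x) b"
      proof (cases "j < n - 1 - k")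
        case True
        then show ?thesis using Pk Qb Qs unfolding dR dS by auto
      next
        case False
        then have j': "j = n - 1 - k" and "k < n" using j by auto
        then have "dn j (\<lambda>x. Q_below k x + delta k * Q_same k x) b = delta k * dn j (Q k) b"
          using Qb j unfolding dS by (simp add: Q_same_eq)
        also have "\<dots> = dn j (Dm (lam n) (P k)) b"
          using Q_props[OF \<open>k < n\<close>] j' by (simp add: delta_def)
        finally show ?thesis by simp
      qed
    qed
    show "length L - 1 < k + (n - k)" using k n_pos by simp
  qed
qed

definition coeff :: "nat \<Rightarrow> complex" where
  "coeff k = (-1) ^ k * (\<Prod>j<k. delta j)"

lemma exp_expansion: "exp (complex_of_real (x - a) * lam n) = (\<Sum>k\<le>n. coeff k * P k x)"
proof -
  define G where "G x = (\<Sum>k\<le>n. coeff k * P k x)" for x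
  have "G \<in> Espace (L @ [lam n])"
    unfolding G_def by (rule Espace_sum) (use P_props in auto)
  then have sG: "smooth G" by (rule Espace_smooth)
  have DmG: "Dm (lam n) G = (\<lambda>x. \<Sum>k\<le>n. coeff k * Dm (lam n) (P k) x)"
    unfolding G_def by (rule Dm_sum) (use P_smooth in auto)
  have ode: "Dm (lam n) G x = 0" for x
  proof -
    have "Dm (lam n) G x = (\<Sum>k\<le>n. coeff k * (Q_below k x + delta k * Q_same k x))"
      unfolding DmG by (intro sum.cong refl) (simp add: Dm_P_recurrence)
    also have "\<dots> = (\<Sum>k\<le>n. coeff k * ((if k = 0 then 0 else Q (k - 1) x)
        + delta k * (if k < n then Q k x else 0)))"
      by (simp add: Q_below_def Q_same_def)
    also have "\<dots> = 0"
      by (rule telescoping_sum) (simp add: coeff_def)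
    finally show ?thesis .
  qed
  have "P k a = (if k = 0 then 1 else 0)" if "k \<le> n" for k
    using P_props[OF that] by (cases k) auto
  then have "G a = (\<Sum>k\<le>n. if k = 0 then 1 else 0)"
    unfolding G_def by (intro sum.cong) (auto simp: coeff_def)
  then have "G a = 1" by simp
  then show ?thesis using Dm_zero_imp_exp[OF sG ode, of x a] by (simp add: G_def)
qed

text \<open>At \<open>b\<close> only the last Bernstein function survives.\<close>
lemma exp_at_b: "exp (complex_of_real (b - a) * lam n) = coeff n * P n b"
proof -
  have "P k b = 0" if "k < n" for k
    using P_props[of k] that by (metis dn.simps(1) less_imp_le_nat zero_less_diff)
  then have "(\<Sum>k\<le>n. coeff k * P k b) = (\<Sum>k\<le>n. if k = n then coeff n * P n b else 0)"
    by (intro sum.cong) auto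
  then show ?thesis using exp_expansion[of b] by simp
qed

lemma delta_nonzero:
  assumes "k < n"
  shows "delta k \<noteq> 0"
proof -
  have "coeff n \<noteq> 0" using exp_at_b by (metis exp_not_eq_zero mult_zero_left)
  then show ?thesis using assms by (simp add: coeff_def)
qed

text \<open>\<open>P_k' = delta_k Q_k + (Q_(k-1) + lam_n P_k)\<close>, and the bracket vanishes at \<open>b\<close> to higher order
  than \<open>Q_k\<close>.\<close>
lemma derivative_quotient_tendsto:
  assumes k: "k < n"
  shows "((\<lambda>x. vector_derivative (P k) (at x) / Q k x) \<longlongrightarrow> delta k) (at b)"
proof -
  note Pk = P_props[of k] and Qb = Q_below_props[of k] and Qk = Q_props[OF k]
  define f where "f x = Q_below k x + lam n * P k x" for x
  have sP: "smooth (P k)" and sQb: "smooth (Q_below k)" and sQ: "smooth (Q k)"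
    using P_smooth Qb Qk k Espace_smooth by auto
  have sf: "smooth f" and df: "dn j f = (\<lambda>x. dn j (Q_below k) x + lam n * dn j (P k) x)" for j
    unfolding f_def using smooth_add[OF sQb smooth_cmult[OF sP, THEN conjunct1]] smooth_cmult[OF sP]
    by auto
  have "\<forall>j\<le>n - 1 - k. dn j f b = 0" using Pk Qb k unfolding df by auto
  from quotient_tendsto_zero[OF sf this sQ] Qk
  have f0: "((\<lambda>x. f x / Q k x) \<longlongrightarrow> 0) (at b)" and ev: "eventually (\<lambda>x. Q k x \<noteq> 0) (at b)"
    by auto
  have "vector_derivative (P k) (at x) = f x + delta k * Q k x" for x
    using fun_cong[OF Dm_P_recurrence[of k], of x] k
    by (simp add: Dm_def f_def Q_same_def algebra_simps)
  then have "eventually (\<lambda>x. f x / Q k x + delta k = vector_derivative (P k) (at x) / Q k x) (at b)"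
    using ev by (auto elim!: eventually_mono simp: field_simps)
  moreover have "((\<lambda>x. f x / Q k x + delta k) \<longlongrightarrow> delta k) (at b)"
    using tendsto_add[OF f0 tendsto_const] by simp
  ultimately show ?thesis using Lim_transform_eventually by fastforce
qed

lemma product_identity:
  assumes k: "k \<le> n"
  shows "(\<Prod>j<k. delta j)
    = (-1) ^ n * (exp (complex_of_real (b - a) * lam n) / P n b) * (1 / (\<Prod>j=k..n-1. delta j))"
proof -
  have split: "(\<Prod>j<n. delta j) = (\<Prod>j<k. delta j) * (\<Prod>j=k..n-1. delta j)"
  proof -
    have "{..<n} = {..<k} \<union> {k..n-1}" using k n_pos by auto
    then show ?thesis by (simp add: prod.union_disjoint ivl_disj_int)
  qed
  have nz: "(\<Prod>j=k..n-1. delta j) \<noteq> 0" using delta_nonzero n_pos by auto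
  have "exp (complex_of_real (b - a) * lam n) / P n b = coeff n"
    using exp_at_b P_props[of n] by (simp add: field_simps)
  then show ?thesis using nz unfolding coeff_def split by (simp add: field_simps flip: power_mult_distrib)
qed

end

theorem mainTheorem10:
  fixes lam :: "nat \<Rightarrow> complex" and n :: nat and a b :: real
    and P Q :: "nat \<Rightarrow> real \<Rightarrow> complex" and d :: "nat \<Rightarrow> complex"
  assumes "n \<ge> 1" and "a \<noteq> b"
    and "ext_cheb (map lam [0..<Suc n]) {a, b}"
    and "ext_cheb (map lam [0..<n]) {a, b}"
  defines "P \<equiv> bern (map lam [0..<Suc n]) a b"
    and "Q \<equiv> bern (map lam [0..<n]) a b"
    and "d \<equiv> (\<lambda>k. Lim (at b) (\<lambda>x. vector_derivative (P k) (at x) / Q k x))"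
  shows "(\<forall>k<n. ((\<lambda>x. vector_derivative (P k) (at x) / Q k x) \<longlongrightarrow> d k) (at b) \<and> d k \<noteq> 0)
    \<and> (\<forall>x. exp (complex_of_real (x - a) * lam n)
            = P 0 x + (\<Sum>k=1..n. (-1) ^ k * (\<Prod>j<k. d j) * P k x))
    \<and> (\<forall>k\<in>{1..n-1}. (\<Prod>j<k. d j)
            = (-1) ^ n * (exp (complex_of_real (b - a) * lam n) / P n b) * (1 / (\<Prod>j=k..n-1. d j)))"
proof -
  interpret bernstein_pair lam n a b
    using assms(1-4) by unfold_locales
  have P_eq: "P = bern (map lam [0..<n] @ [lam n]) a b" unfolding P_def by simp
  have lim: "((\<lambda>x. vector_derivative (P k) (at x) / Q k x) \<longlongrightarrow> delta k) (at b)" if "k < n" for k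
    using derivative_quotient_tendsto[OF that] unfolding P_eq Q_def .
  have d_delta: "d k = delta k" if "k < n" for k
    unfolding d_def using tendsto_Lim[OF trivial_limit_at lim[OF that]] .
  have prod_d: "(\<Prod>j\<in>J. d j) = (\<Prod>j\<in>J. delta j)" if "J \<subseteq> {..<n}" for J
    using d_delta that by (intro prod.cong) auto
  have expansion: "exp (complex_of_real (x - a) * lam n)
      = P 0 x + (\<Sum>k=1..n. (-1) ^ k * (\<Prod>j<k. d j) * P k x)" for x
  proof -
    have "{..n} = insert 0 {1..n}" by auto
    then show ?thesis
      using exp_expansion[of x] prod_d[of "{..<_}"] unfolding P_eq coeff_def by (auto intro!: sum.cong)
  qed
  have "(\<Prod>j<k. d j)
      = (-1) ^ n * (exp (complex_of_real (b - a) * lam n) / P n b) * (1 / (\<Prod>j=k..n-1. d j))"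
    if "k \<in> {1..n-1}" for k
  proof -
    have "{..<k} \<subseteq> {..<n}" "{k..n-1} \<subseteq> {..<n}" using that assms(1) by auto
    then show ?thesis using product_identity[of k] prod_d that unfolding P_eq by auto
  qed
  then show ?thesis using lim d_delta delta_nonzero expansion by auto
qed

end
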